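(* Let $\mathbb{E}$ be a field with $p=\mathrm{char}(\mathbb{E})$, let $m>1$ with $\gcd(m,p)=1$ if $p>0$, and let $s_0,\ldots,s_{m-1}$ be an enumeration of a subgroup $M$ of $\mathbb{E}^*$ of size $m$ such that $\phi_{p,m}(x)$ divides $\tilde{s}(x)=s_0x^{m-1}+s_1x^{m-2}+\cdots+s_{m-1}$. Let $f(x)=(x^m-1)/\gcd(x^m-1,\tilde{s}(x))$. Then the sequence obtained by extending $s_0,\ldots,s_{m-1}$ periodically with period $m$ is an $f$-sequence presenting $M$, and $f$ divides $(x^m-1)/\big((x-1)\phi_{p,m}(x)\big)$; that is, $M$ is an automatically non-standard $f$-subgroup.
   Context: $\phi_{p,m}(x)$ is the $m$th cyclotomic polynomial $\phi_m(x)\in\mathbb{Z}[x]$ (defined by $x^m-1=\prod_{d\mid m}\phi_d(x)$), reduced modulo $p$ if $p>0$; when $\gcd(m,p)=1$ its zeros are exactly the primitive $m$th roots of unity. An $f$-sequence is a two-way infinite sequence with $f(\sigma)s=0$, $(\sigma s)_n=s_{n+1}$. A sequence $s$ presents a finite subgroup $M$ if $s$ has smallest period $|M|$ and $M=\{s_0,\ldots,s_{|M|-1}\}$. Definition: for a field $\mathbb{F}$ of characteristic $p$ and $m>1$ with $\gcd(m,p)=1$ if $p>0$, if $f\in\mathbb{F}[x]$ divides $(x^m-1)/((x-1)\phi_{p,m}(x))$ and an $f$-sequence $s$ (over an extension of $\mathbb{F}$) of period $m$ has $M=\{s_0,\ldots,s_{m-1}\}$ a subgroup of size $m$, then $M$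 is called an automatically non-standard $f$-subgroup. *)

theory Defs
  imports "HOL-Computational_Algebra.Computational_Algebra"
begin

text \<open>Integer cyclotomic polynomials, defined recursively by
  x^m - 1 = product over all divisors d of m of cyclo d.\<close>
function cyclo :: "nat \<Rightarrow> int poly" where
  "cyclo m = (if m = 0 then 1 else
      (monom 1 m - 1) div prod_list (map cyclo (filter (\<lambda>d. d dvd m) [1..<m])))"
  by auto
termination
  by (relation "measure id") auto

declare cyclo.simps [simp del]

text \<open>phi_{p,m}: the m-th cyclotomic polynomial mapped into the field (reduced mod p).\<close>
definition cyclo_field :: "nat \<Rightarrow> 'a::field poly" where
  "cyclo_field m = map_poly of_int (cyclo m)"

definition f_sequence :: "'a::comm_ring_1 poly \<Rightarrow> (int \<Rightarrow> 'a) \<Rightarrow> bool" where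
  "f_sequence f s \<longleftrightarrow> (\<forall>n::int. (\<Sum>i\<le>degree f. coeff f i * s (n + int i)) = 0)"

definition is_period :: "(int \<Rightarrow> 'a) \<Rightarrow> nat \<Rightarrow> bool" where
  "is_period s k \<longleftrightarrow> k > 0 \<and> (\<forall>n. s (n + int k) = s n)"

definition smallest_period :: "(int \<Rightarrow> 'a) \<Rightarrow> nat \<Rightarrow> bool" where
  "smallest_period s k \<longleftrightarrow> is_period s k \<and> (\<forall>j. 0 < j \<and> j < k \<longrightarrow> \<not> is_period s j)"

definition presents :: "(int \<Rightarrow> 'a) \<Rightarrow> 'a set \<Rightarrow> bool" where
  "presents s M \<longleftrightarrow> finite M \<and> smallest_period s (card M) \<and> M = s ` {0..<int (card M)}"

definition mult_subgroup :: "'a::field set \<Rightarrow> bool" where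
  "mult_subgroup M \<longleftrightarrow> 0 \<notin> M \<and> 1 \<in> M \<and> (\<forall>x\<in>M. \<forall>y\<in>M. x * y \<in> M)
     \<and> (\<forall>x\<in>M. inverse x \<in> M)"

end

theory Submission
  imports Defs
begin

text \<open>
  Write s~ for the polynomial of the period and Q = x^m - 1. Since f * gcd(Q, s~) = Q, Q divides
  f * s~. Multiplication by x acts on the polynomials of the cyclic shifts of the period as the
  shift itself, modulo Q; hence f * x^k s~ is congruent modulo Q to a polynomial of degree < m
  whose coefficient of x^(m-1) is the recurrence sum of f at position k, and this polynomial must
  vanish. For the divisibility, (x - 1) phi_m divides Q (the cyclotomic factorisation, proved over
  the complex numbers by counting root multiplicities and brought back to the integers because all
  factors are monic) and it divides s~: phi_m does by hypothesis, s~(1) is the sum of the elements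
  of M, which is 0, and phi_m(1) is nonzero because Q is separable when p does not divide m. So
  (x - 1) phi_m divides gcd(Q, s~), and f = Q / gcd(Q, s~) divides Q / ((x - 1) phi_m).
\<close>

abbreviation of_int_poly :: "int poly \<Rightarrow> 'a::comm_ring_1 poly" where
  "of_int_poly \<equiv> map_poly of_int"

lemma of_int_poly_diff:
  "of_int_poly (p - q) = (of_int_poly p - of_int_poly q :: 'a::comm_ring_1 poly)"
  by (rule poly_eqI) (simp add: coeff_map_poly)

lemma of_int_poly_mult:
  "of_int_poly (p * q) = (of_int_poly p * of_int_poly q :: 'a::comm_ring_1 poly)"
  by (rule poly_eqI) (simp add: coeff_map_poly coeff_mult of_int_sum)

lemma of_int_poly_prod:
  "of_int_poly (\<Prod>x\<in>A. f x) = (\<Prod>x\<in>A. of_int_poly (f x) :: 'a::comm_ring_1 poly)"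
  by (induction A rule: infinite_finite_induct) (simp_all add: of_int_poly_mult)

lemma of_int_poly_dvd:
  "p dvd q \<Longrightarrow> (of_int_poly p :: 'a::comm_ring_1 poly) dvd of_int_poly q"
  by (metis dvdE dvdI of_int_poly_mult)

lemma of_int_poly_monom_minus_1:
  "of_int_poly (monom 1 m - 1) = (monom 1 m - 1 :: 'a::comm_ring_1 poly)"
  by (simp add: of_int_poly_diff map_poly_monom)

lemma degree_monom_minus_1: "0 < m \<Longrightarrow> degree (monom (1::'a::comm_ring_1) m - 1) = m"
  using degree_add_eq_left[of "-1" "monom (1::'a) m"] by (simp add: degree_monom_eq)

lemma monom_minus_1_neq_0: "0 < m \<Longrightarrow> monom (1::'a::comm_ring_1) m - 1 \<noteq> 0"
  by (metis degree_0 degree_monom_minus_1 less_irrefl)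

lemma lead_coeff_monom_minus_1: "0 < m \<Longrightarrow> lead_coeff (monom (1::'a::comm_ring_1) m - 1) = 1"
  by (simp add: degree_monom_minus_1)

lemma order_le_1_if_poly_pderiv_neq_0:
  fixes p :: "'a::idom poly"
  assumes "poly (pderiv p) a \<noteq> 0"
  shows "order a p \<le> 1"
proof (rule ccontr)
  assume "\<not> order a p \<le> 1"
  then have "[:-a, 1:] ^ 2 dvd p" by (simp add: order_divides)
  then obtain k where "p = [:-a, 1:] * ([:-a, 1:] * k)"
    by (metis dvdE power2_eq_square mult.assoc)
  then have "pderiv p = [:-a, 1:] * pderiv ([:-a, 1:] * k) + [:-a, 1:] * k * pderiv [:-a, 1:]"
    by (simp only: pderiv_mult)
  then show False using assms by simp
qed

lemma order_monom_minus_1: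
  fixes a :: "'a::field"
  assumes m: "of_nat m \<noteq> (0::'a)"
  shows "order a (monom 1 m - 1) = of_bool (a ^ m = 1)"
proof (cases "a ^ m = 1")
  case False
  then show ?thesis by (simp add: order_0I poly_monom)
next
  case True
  let ?Q = "monom (1::'a) m - 1"
  have "0 < m" using m by (rule contrapos_np) simp
  then have "?Q \<noteq> 0" by (rule monom_minus_1_neq_0)
  moreover have "poly ?Q a = 0" using True by (simp add: poly_monom)
  ultimately have "order a ?Q \<noteq> 0" by (metis order_root)
  moreover have "poly (pderiv ?Q) a \<noteq> 0"
    using True m \<open>0 < m\<close> by (auto simp: pderiv_diff pderiv_monom poly_monom power_0_left)
  then have "order a ?Q \<le> 1" by (rule order_le_1_if_poly_pderiv_neq_0)
  ultimately show ?thesis using True by simp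
qed

lemma dvd_if_order_le:
  fixes p q :: "complex poly"
  assumes "p \<noteq> 0" "q \<noteq> 0" "\<And>a. order a p \<le> order a q"
  shows "p dvd q"
  using assms
proof (induction p arbitrary: q rule: poly_root_order_induct)
  case 0
  then show ?case by simp
next
  case (no_roots p)
  then have "degree p = 0" using fundamental_theorem_of_algebra constant_degree by blast
  then obtain c where "p = [:c:]" by (meson degree_eq_zeroE)
  with no_roots show ?case by (simp add: const_poly_dvd_iff dvd_field_iff)
next
  case (root p x n)
  have "n \<le> order x q"
    using root.prems(1) root.prems(3)[of x] by (simp add: order_mult order_power_n_n)
  then have "[:-x, 1:] ^ n dvd q" by (simp add: order_divides)
  then obtain q' where q': "q = [:-x, 1:] ^ n * q'" by (elim dvdE)
  moreover have "q' \<noteq> 0" using root.prems(2) q' by auto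
  moreover have "order a p \<le> order a q'" for a
    using root.prems(3)[of a] root.prems(1) q' \<open>q' \<noteq> 0\<close> by (simp add: order_mult)
  ultimately show ?case using root.IH root.prems(1) by (auto intro: mult_dvd_mono)
qed

lemma dvd_if_of_int_poly_dvd:
  fixes f g :: "int poly"
  assumes monic: "lead_coeff g = 1"
    and dvd: "(of_int_poly g :: 'a::field_char_0 poly) dvd of_int_poly f"
  shows "g dvd f"
proof -
  define r where "r = pseudo_mod f g"
  have "g \<noteq> 0" using monic by auto
  then obtain a q where a: "a \<noteq> 0" and div: "smult a f = g * q + r"
    using pseudo_mod(1) unfolding r_def by blast
  have "r = 0"
  proof (rule ccontr)
    assume "r \<noteq> 0"
    have "r = smult a f - g * q" using div by simp
    then have "(of_int_poly r :: 'a poly)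
        = smult (of_int a) (of_int_poly f) - of_int_poly g * of_int_poly q"
      by (simp add: of_int_poly_diff of_int_poly_mult map_poly_smult)
    then have "(of_int_poly g :: 'a poly) dvd of_int_poly r"
      using dvd by (simp add: dvd_diff dvd_smult)
    moreover have "(of_int_poly r :: 'a poly) \<noteq> 0"
      using \<open>r \<noteq> 0\<close> by (simp add: map_poly_eq_0_iff)
    ultimately have "degree g \<le> degree r"
      using monic \<open>r \<noteq> 0\<close>
      by (metis dvd_imp_degree_le degree_map_poly of_int_1 one_neq_zero of_int_eq_0_iff)
    moreover have "degree r < degree g"
      using pseudo_mod(2)[OF \<open>g \<noteq> 0\<close>] \<open>r \<noteq> 0\<close> r_def by blast
    ultimately show False by simp
  qed
  then have "g dvd smult a f" using div by simp
  then show ?thesis using dvd_monic[OF monic _ a] by blast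
qed

definition primitive_root_of_unity :: "nat \<Rightarrow> 'a::monoid_mult \<Rightarrow> bool" where
  "primitive_root_of_unity d a \<longleftrightarrow>
    0 < d \<and> a ^ d = 1 \<and> (\<forall>k. 0 < k \<longrightarrow> k < d \<longrightarrow> a ^ k \<noteq> 1)"

lemma primitive_root_of_unity_unique:
  "primitive_root_of_unity d a \<Longrightarrow> primitive_root_of_unity e a \<Longrightarrow> d = e"
  unfolding primitive_root_of_unity_def by (cases d e rule: linorder_cases) auto

lemma primitive_root_of_unity_exists_dvd:
  fixes a :: "'a::monoid_mult"
  assumes "0 < m" "a ^ m = 1"
  obtains d where "d dvd m" "primitive_root_of_unity d a"
proof -
  define d where "d = (LEAST k. 0 < k \<and> a ^ k = 1)"
  have d: "0 < d \<and> a ^ d = 1"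
    unfolding d_def by (rule LeastI[of _ m]) (use assms in blast)
  have d_least: "d \<le> k" if "0 < k" "a ^ k = 1" for k
    unfolding d_def by (rule Least_le) (use that in blast)
  have "a ^ m = a ^ (d * (m div d) + m mod d)" by (simp only: mult_div_mod_eq)
  also have "\<dots> = (a ^ d) ^ (m div d) * a ^ (m mod d)" by (simp only: power_add power_mult)
  finally have "a ^ (m mod d) = 1" using assms(2) d by simp
  have "m mod d = 0"
  proof (rule ccontr)
    assume "m mod d \<noteq> 0"
    then have "d \<le> m mod d" using d_least \<open>a ^ (m mod d) = 1\<close> by blast
    moreover have "m mod d < d" using d by simp
    ultimately show False by simp
  qed
  moreover have "primitive_root_of_unity d a"
    unfolding primitive_root_of_unity_def using d d_least leD by blast
  ultimately show ?thesis using that by (simp add: mod_eq_0_iff_dvd)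
qed

lemma card_divisors_primitive_root_of_unity:
  fixes a :: "'a::monoid_mult"
  assumes "0 < m"
  shows "card {d. d dvd m \<and> primitive_root_of_unity d a} = of_bool (a ^ m = 1)"
proof (cases "a ^ m = 1")
  case True
  then obtain d where d: "d dvd m" "primitive_root_of_unity d a"
    using primitive_root_of_unity_exists_dvd[OF assms True] by blast
  then have "{d. d dvd m \<and> primitive_root_of_unity d a} = {d}"
    using d by (auto dest: primitive_root_of_unity_unique)
  then show ?thesis using True by simp
next
  case False
  have "a ^ m = 1" if "d dvd m" and prim: "primitive_root_of_unity d a" for d
  proof -
    obtain k where "m = d * k" using \<open>d dvd m\<close> by (elim dvdE)
    then show ?thesis using prim by (simp add: primitive_root_of_unity_def power_mult)
  qed
  then have none: "{d. d dvd m \<and> primitive_root_of_unity d a} = {}" using False by blast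
  show ?thesis unfolding none using False by simp
qed

lemma order_prod:
  fixes f :: "'b \<Rightarrow> 'a::idom poly"
  assumes "\<And>x. x \<in> A \<Longrightarrow> f x \<noteq> 0"
  shows "order a (\<Prod>x\<in>A. f x) = (\<Sum>x\<in>A. order a (f x))"
  using assms
proof (induction A rule: infinite_finite_induct)
  case (insert x A)
  then have "(\<Prod>x\<in>A. f x) \<noteq> 0" by auto
  with insert show ?case by (simp add: order_mult)
qed (simp_all add: order_0I)

lemma cyclo_eq_div_prod:
  assumes "0 < m"
  shows "cyclo m = (monom 1 m - 1) div (\<Prod>d | d dvd m \<and> d < m. cyclo d)"
proof -
  have "set (filter (\<lambda>d. d dvd m) [1..<m]) = {d. d dvd m \<and> d < m}"
    using assms by (auto intro: Nat.gr0I)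
  then have "prod_list (map cyclo (filter (\<lambda>d. d dvd m) [1..<m]))
      = (\<Prod>d | d dvd m \<and> d < m. cyclo d)"
    by (metis distinct_filter distinct_upt prod.distinct_set_conv_list)
  then show ?thesis using assms by (subst cyclo.simps) simp
qed

lemma order_prod_cyclo_proper_divisors:
  fixes a :: complex
  assumes m: "0 < m"
    and cyclo_d: "\<And>d. d dvd m \<Longrightarrow> d < m \<Longrightarrow> lead_coeff (cyclo d) = 1
      \<and> order a (of_int_poly (cyclo d)) = of_bool (primitive_root_of_unity d a)"
  shows "order a (of_int_poly (\<Prod>d | d dvd m \<and> d < m. cyclo d))
    = of_bool (a ^ m = 1) - of_bool (primitive_root_of_unity m a)"
proof -
  define D where "D = {d. d dvd m \<and> d < m}"
  define roots where "roots = {d. d dvd m \<and> primitive_root_of_unity d a}"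
  have "finite D" unfolding D_def by simp
  have "order a (of_int_poly (\<Prod>d\<in>D. cyclo d)) = (\<Sum>d\<in>D. order a (of_int_poly (cyclo d)))"
    unfolding of_int_poly_prod using cyclo_d
    by (intro order_prod) (fastforce simp: D_def map_poly_eq_0_iff)
  also have "\<dots> = (\<Sum>d\<in>D. of_bool (primitive_root_of_unity d a))"
    using cyclo_d by (intro sum.cong) (simp_all add: D_def)
  also have "\<dots> = card (D \<inter> {d. primitive_root_of_unity d a})"
    using \<open>finite D\<close> by simp
  also have "\<dots> = card (roots - {m})"
    using m by (auto simp: D_def roots_def dest: dvd_imp_le intro!: arg_cong[where f=card])
  also have "\<dots> = of_bool (a ^ m = 1) - of_bool (primitive_root_of_unity m a)"
    using card_divisors_primitive_root_of_unity[OF m, of a]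
    by (simp add: card_Diff_singleton_if roots_def)
  finally show ?thesis unfolding D_def .
qed

text \<open>
  Simultaneous induction: by the root multiplicities of the smaller cyclotomic polynomials, their
  product divides x^m - 1 over the complex numbers, and being monic it does so over the integers.
\<close>

lemma cyclo_monic_factor_roots:
  assumes "0 < m"
  shows "lead_coeff (cyclo m) = 1
    \<and> cyclo m * (\<Prod>d | d dvd m \<and> d < m. cyclo d) = monom 1 m - 1
    \<and> (\<forall>a::complex. order a (of_int_poly (cyclo m)) = of_bool (primitive_root_of_unity m a))"
  using assms
proof (induction m rule: less_induct)
  case (less m)
  define P where "P = (\<Prod>d | d dvd m \<and> d < m. cyclo d)"
  define Q where "Q = (monom 1 m - 1 :: int poly)"
  have cyclo_d: "lead_coeff (cyclo d) = 1
      \<and> order a (of_int_poly (cyclo d)) = of_bool (primitive_root_of_unity d a)"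
    if "d dvd m" "d < m" for d and a :: complex
    using less.IH[of d] that less.prems by (auto intro: Nat.gr0I)
  have order_P:
      "order a (of_int_poly P) = of_bool (a ^ m = 1) - of_bool (primitive_root_of_unity m a)"
    for a :: complex
    unfolding P_def using less.prems cyclo_d by (rule order_prod_cyclo_proper_divisors)
  have order_Q: "order a (of_int_poly Q) = of_bool (a ^ m = 1)" for a :: complex
    unfolding Q_def of_int_poly_monom_minus_1 using less.prems by (simp add: order_monom_minus_1)
  have monic_P: "lead_coeff P = 1" unfolding P_def using cyclo_d by (simp add: lead_coeff_prod)
  have Q_nonzero: "(of_int_poly Q :: complex poly) \<noteq> 0"
    unfolding Q_def of_int_poly_monom_minus_1 using less.prems by (rule monom_minus_1_neq_0)
  have "(of_int_poly P :: complex poly) dvd of_int_poly Q"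
    using monic_P Q_nonzero order_P order_Q
    by (intro dvd_if_order_le) (auto simp: map_poly_eq_0_iff)
  then have "P dvd Q" by (rule dvd_if_of_int_poly_dvd[OF monic_P])
  then have factor: "cyclo m * P = Q"
    unfolding P_def Q_def cyclo_eq_div_prod[OF less.prems] by simp
  have "lead_coeff (cyclo m) = lead_coeff Q"
    using lead_coeff_mult[of "cyclo m" P] factor monic_P by simp
  also have "\<dots> = 1" unfolding Q_def using less.prems by (rule lead_coeff_monom_minus_1)
  finally have monic: "lead_coeff (cyclo m) = 1" .
  have order: "order a (of_int_poly (cyclo m)) = of_bool (primitive_root_of_unity m a)"
    for a :: complex
  proof -
    have "order a (of_int_poly Q) = order a (of_int_poly (cyclo m)) + order a (of_int_poly P)"
      using Q_nonzero unfolding factor[symmetric] of_int_poly_mult by (simp add: order_mult)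
    moreover have "primitive_root_of_unity m a \<Longrightarrow> a ^ m = 1"
      by (simp add: primitive_root_of_unity_def)
    ultimately show ?thesis using order_P[of a] order_Q[of a]
      by (cases "a ^ m = 1"; cases "primitive_root_of_unity m a") simp_all
  qed
  show ?case using monic factor order unfolding P_def Q_def by simp
qed

lemma cyclo_mult_prod_proper_divisors:
  "0 < m \<Longrightarrow> cyclo m * (\<Prod>d | d dvd m \<and> d < m. cyclo d) = monom 1 m - 1"
  using cyclo_monic_factor_roots by blast

lemma cyclo_1: "cyclo 1 = [:-1, 1:]"
proof -
  have none: "{d. d dvd 1 \<and> d < (1::nat)} = {}" by auto
  show ?thesis
    using cyclo_mult_prod_proper_divisors[of 1] unfolding none
    by (simp add: monom_Suc monom_0 one_pCons)
qed

lemma x_minus_1_mult_cyclo_dvd: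
  assumes "1 < m"
  shows "[:-1, 1:] * cyclo m dvd monom 1 m - 1"
proof -
  have "cyclo 1 dvd (\<Prod>d | d dvd m \<and> d < m. cyclo d)"
    using assms by (intro dvd_prodI) auto
  then have "cyclo 1 * cyclo m dvd cyclo m * (\<Prod>d | d dvd m \<and> d < m. cyclo d)"
    by (simp only: mult.commute[of "cyclo 1"] mult_dvd_mono dvd_refl)
  then show ?thesis
    using assms unfolding cyclo_1 by (simp only: cyclo_mult_prod_proper_divisors)
qed

lemma x_minus_1_mult_cyclo_field_dvd:
  assumes "1 < m"
  shows "[:-1, 1:] * cyclo_field m dvd (monom 1 m - 1 :: 'a::field poly)"
proof -
  have "of_int_poly [:-1, 1:] = ([:-1, 1:] :: 'a poly)" by (simp add: map_poly_pCons)
  then show ?thesis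
    using of_int_poly_dvd[OF x_minus_1_mult_cyclo_dvd[OF assms], where 'a='a]
    unfolding of_int_poly_mult of_int_poly_monom_minus_1 cyclo_field_def by simp
qed

lemma poly_cyclo_field_1_neq_0:
  fixes m :: nat
  assumes "1 < m" and "of_nat m \<noteq> (0::'a::field)"
  shows "poly (cyclo_field m :: 'a poly) 1 \<noteq> 0"
proof
  assume "poly (cyclo_field m :: 'a poly) 1 = 0"
  then have "[:-1, 1:] dvd (cyclo_field m :: 'a poly)" by (simp add: poly_eq_0_iff_dvd)
  then have "[:-1, 1:] ^ 2 dvd [:-1, 1:] * (cyclo_field m :: 'a poly)"
    unfolding power2_eq_square by (rule mult_dvd_mono[OF dvd_refl])
  then have "[:-1, 1:] ^ 2 dvd (monom 1 m - 1 :: 'a poly)"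
    using x_minus_1_mult_cyclo_field_dvd[OF assms(1)] by (rule dvd_trans)
  moreover have "(monom 1 m - 1 :: 'a poly) \<noteq> 0"
    using assms(1) by (intro monom_minus_1_neq_0) simp
  ultimately have "2 \<le> order 1 (monom 1 m - 1 :: 'a poly)" by (simp add: order_divides)
  then show False using assms(2) by (simp add: order_monom_minus_1)
qed

lemma of_nat_neq_0_if_coprime_CHAR:
  assumes "0 < m" and "0 < CHAR('a) \<Longrightarrow> coprime m CHAR('a)"
  shows "of_nat m \<noteq> (0::'a::semiring_1)"
proof
  assume "of_nat m = (0::'a)"
  then have "CHAR('a) dvd m" by (simp add: of_nat_eq_0_iff_char_dvd)
  moreover from this have "0 < CHAR('a)" using assms(1) by (auto intro: Nat.gr0I)
  ultimately have "is_unit CHAR('a)" using assms(2) by (meson coprime_common_divisor dvd_refl)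
  then show False by simp
qed

definition window_poly :: "nat \<Rightarrow> (nat \<Rightarrow> 'a::comm_ring_1) \<Rightarrow> nat \<Rightarrow> 'a poly" where
  "window_poly m s k = (\<Sum>j<m. monom (s ((k + j) mod m)) (m - 1 - j))"

lemma window_poly_0: "window_poly m s 0 = (\<Sum>i<m. monom (s i) (m - 1 - i))"
  unfolding window_poly_def by (rule sum.cong) simp_all

lemma degree_window_poly: "degree (window_poly m s k) \<le> m - 1"
  unfolding window_poly_def
  by (intro degree_sum_le) (auto intro: order.trans[OF degree_monom_le])

lemma coeff_window_poly_top: "0 < m \<Longrightarrow> coeff (window_poly m s k) (m - 1) = s (k mod m)"
  unfolding window_poly_def coeff_sum coeff_monom
  by (subst sum.cong[OF refl, of _ _ "\<lambda>j. if j = 0 then s ((k + j) mod m) else 0"]) auto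

lemma x_mult_window_poly:
  assumes "0 < m"
  shows "monom 1 1 * window_poly m s k
    = window_poly m s (Suc k) + smult (s (k mod m)) (monom 1 m - 1)"
proof -
  obtain r where r: "m = Suc r" using assms by (cases m) auto
  have "monom 1 1 * window_poly m s k = (\<Sum>j<Suc r. monom (s ((k + j) mod m)) (Suc r - j))"
    unfolding window_poly_def r sum_distrib_left
    by (rule sum.cong) (simp_all add: mult_monom Suc_diff_le)
  also have "\<dots> = monom (s (k mod m)) m + (\<Sum>j<r. monom (s ((Suc k + j) mod m)) (r - j))"
    by (subst sum.lessThan_Suc_shift) (simp add: r)
  also have "(\<Sum>j<r. monom (s ((Suc k + j) mod m)) (r - j))
      = window_poly m s (Suc k) - monom (s (k mod m)) 0"
    using mod_add_self2[of k m] unfolding window_poly_def r by (simp add: sum.lessThan_Suc)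
  finally show ?thesis by (simp add: smult_diff_right smult_monom monom_0)
qed

lemma monom_minus_1_dvd_shift_window_poly:
  fixes s :: "nat \<Rightarrow> 'a::comm_ring_1"
  assumes "0 < m"
  shows "monom 1 m - 1 dvd monom 1 i * window_poly m s k - window_poly m s (k + i)"
proof (induction i)
  case 0
  then show ?case by (simp add: monom_0)
next
  case (Suc i)
  have x_pow_Suc: "monom (1::'a) (Suc i) = monom 1 1 * monom 1 i" by (simp add: mult_monom)
  have "monom 1 (Suc i) * window_poly m s k - window_poly m s (k + Suc i)
      = monom 1 1 * (monom 1 i * window_poly m s k - window_poly m s (k + i))
        + (monom 1 1 * window_poly m s (k + i) - window_poly m s (Suc (k + i)))"
    unfolding x_pow_Suc by (simp add: algebra_simps)
  also have "monom 1 1 * window_poly m s (k + i) - window_poly m s (Suc (k + i))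
      = smult (s ((k + i) mod m)) (monom 1 m - 1)"
    using x_mult_window_poly[OF assms, of s "k + i"] by simp
  finally show ?case using Suc.IH by (simp add: dvd_add dvd_mult dvd_smult)
qed

lemma monom_minus_1_dvd_window_combination:
  fixes s :: "nat \<Rightarrow> 'a::comm_ring_1"
  assumes "0 < m"
  shows "monom 1 m - 1 dvd
    u * window_poly m s k - (\<Sum>i\<le>degree u. smult (coeff u i) (window_poly m s (k + i)))"
proof -
  have "u * window_poly m s k = (\<Sum>i\<le>degree u. monom (coeff u i) i) * window_poly m s k"
    by (simp only: poly_as_sum_of_monoms)
  also have "\<dots> = (\<Sum>i\<le>degree u. smult (coeff u i) (monom 1 i * window_poly m s k))"
    by (simp add: sum_distrib_right smult_monom_mult)
  finally have "u * window_poly m s k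
        - (\<Sum>i\<le>degree u. smult (coeff u i) (window_poly m s (k + i)))
      = (\<Sum>i\<le>degree u.
          smult (coeff u i) (monom 1 i * window_poly m s k - window_poly m s (k + i)))"
    by (simp add: sum_subtractf smult_diff_right)
  also have "monom 1 m - 1 dvd \<dots>"
    by (intro dvd_sum dvd_smult monom_minus_1_dvd_shift_window_poly assms)
  finally show ?thesis .
qed

lemma recurrence_if_monom_minus_1_dvd:
  fixes s :: "nat \<Rightarrow> 'a::idom"
  assumes m: "0 < m" and dvd: "monom 1 m - 1 dvd u * window_poly m s 0"
  shows "(\<Sum>i\<le>degree u. coeff u i * s ((k + i) mod m)) = 0"
proof -
  define Q where "Q = (monom 1 m - 1 :: 'a poly)"
  define V where "V = window_poly m s"
  define W where "W = (\<Sum>i\<le>degree u. smult (coeff u i) (V (k + i)))"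
  have "u * V k = monom 1 k * (u * V 0) - u * (monom 1 k * V 0 - V k)"
    by (simp add: algebra_simps)
  also have "Q dvd \<dots>"
    using dvd monom_minus_1_dvd_shift_window_poly[OF m, of k s 0, simplified]
    unfolding Q_def V_def by simp
  finally have "Q dvd u * V k" .
  moreover have "Q dvd u * V k - W"
    using monom_minus_1_dvd_window_combination[OF m, of u s k] unfolding Q_def V_def W_def .
  ultimately have "Q dvd W" using dvd_diff[of Q "u * V k" "u * V k - W"] by simp
  moreover have "degree W \<le> m - 1"
    unfolding W_def V_def
    by (intro degree_sum_le finite_atMost order.trans[OF degree_smult_le degree_window_poly])
  then have "degree W < degree Q" unfolding Q_def degree_monom_minus_1[OF m] using m by linarith
  ultimately have "W = 0" using dvd_imp_degree_le[of Q W] by fastforce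
  then have "coeff W (m - 1) = 0" by simp
  then show ?thesis unfolding W_def V_def coeff_sum coeff_smult coeff_window_poly_top[OF m]
    by (simp add: mod_add_left_eq)
qed

lemma f_sequence_periodic_extension:
  fixes s :: "nat \<Rightarrow> 'a::idom"
  assumes m: "0 < m" and dvd: "monom 1 m - 1 dvd u * (\<Sum>i<m. monom (s i) (m - 1 - i))"
  shows "f_sequence u (\<lambda>n::int. s (nat (n mod int m)))"
  unfolding f_sequence_def
proof
  fix n :: int
  define k where "k = nat (n mod int m)"
  have "int k = n mod int m" unfolding k_def using m by simp
  then have "(n + int i) mod int m = int ((k + i) mod m)" for i
    by (metis mod_add_left_eq of_nat_add of_nat_mod)
  then have "nat ((n + int i) mod int m) = (k + i) mod m" for i by simp
  then show "(\<Sum>i\<le>degree u. coeff u i * s (nat ((n + int i) mod int m))) = 0"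
    using recurrence_if_monom_minus_1_dvd[OF m, of u s k] dvd by (simp add: window_poly_0)
qed

lemma presents_periodic_extension:
  assumes "0 < m" and inj: "inj_on s {..<m}"
  shows "presents (\<lambda>n::int. s (nat (n mod int m))) (s ` {..<m})"
proof -
  define t where "t = (\<lambda>n::int. s (nat (n mod int m)))"
  have t_of_nat: "t (int j) = s j" if "j < m" for j
    unfolding t_def using that by (simp flip: of_nat_mod)
  have card: "card (s ` {..<m}) = m" using inj by (simp add: card_image)
  have image: "t ` {0..<int m} = s ` {..<m}"
  proof (intro equalityI subsetI)
    fix x assume "x \<in> t ` {0..<int m}"
    then obtain n where "0 \<le> n" "n < int m" "x = t (int (nat n))" by auto
    then have "x = s (nat n)" using t_of_nat[of "nat n"] by simp
    moreover have "nat n < m" using \<open>0 \<le> n\<close> \<open>n < int m\<close> by (simp add: nat_less_iff)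
    ultimately show "x \<in> s ` {..<m}" by simp
  next
    fix x assume "x \<in> s ` {..<m}"
    then obtain j where "j < m" "x = t (int j)" using t_of_nat by auto
    then show "x \<in> t ` {0..<int m}" by auto
  qed
  have period: "is_period t m" unfolding is_period_def t_def using assms(1) by simp
  have minimal: "\<not> is_period t j" if "0 < j" "j < m" for j
  proof
    assume "is_period t j"
    then have "t (0 + int j) = t 0" unfolding is_period_def by blast
    then have "s j = s 0" using t_of_nat[of j] t_of_nat[of 0] that by simp
    then show False using inj that by (auto dest: inj_onD)
  qed
  show ?thesis
    unfolding presents_def smallest_period_def card t_def[symmetric]
    using image period minimal by blast
qed

lemma mult_subgroup_sum_eq_0:
  fixes M :: "'a::field set"
  assumes sg: "mult_subgroup M" and fin: "finite M" and card: "1 < card M"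
  shows "\<Sum>M = 0"
proof -
  have "\<not> M \<subseteq> {1}"
  proof
    assume "M \<subseteq> {1}"
    then have "card M \<le> card {1::'a}" by (intro card_mono) auto
    then show False using card by simp
  qed
  then obtain g where g: "g \<in> M" "g \<noteq> 1" by blast
  have "g \<noteq> 0" using sg g unfolding mult_subgroup_def by blast
  then have inj: "inj_on ((*) g) M" by (auto intro: inj_onI)
  have "(*) g ` M \<subseteq> M" using sg g unfolding mult_subgroup_def by blast
  then have "(*) g ` M = M" using inj fin by (metis card_image card_subset_eq)
  then have "\<Sum>M = (\<Sum>x\<in>M. g * x)" using inj by (metis sum.reindex_cong)
  also have "\<dots> = g * \<Sum>M" by (simp add: sum_distrib_left)
  finally have "(g - 1) * \<Sum>M = 0" by (simp add: algebra_simps)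
  then show ?thesis using g by simp
qed

lemma mult_linear_dvd_if_root:
  fixes p q :: "'a::idom poly"
  assumes "p dvd q" "poly q a = 0" "poly p a \<noteq> 0"
  shows "[:-a, 1:] * p dvd q"
proof -
  obtain k where k: "q = p * k" using assms(1) by (elim dvdE)
  then have "poly k a = 0" using assms(2,3) by simp
  then have "[:-a, 1:] dvd k" by (simp add: poly_eq_0_iff_dvd)
  then show ?thesis unfolding k mult.commute[of p k] by (rule mult_dvd_mono[OF _ dvd_refl])
qed

lemma div_dvd_div_if_dvd:
  fixes a b c :: "'a::idom_divide"
  assumes "b dvd c" "c dvd a"
  shows "a div c dvd a div b"
proof (cases "c = 0")
  case True
  then show ?thesis using assms by simp
next
  case False
  obtain x where x: "a = c * x" using assms(2) by (elim dvdE)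
  obtain y where y: "c = b * y" using assms(1) by (elim dvdE)
  have "a div c = x" using x False by simp
  moreover have "a div b = y * x" using x y False by (simp add: mult.assoc)
  ultimately show ?thesis by simp
qed

theorem mainTheorem7:
  fixes s :: "nat \<Rightarrow> 'a::field_gcd" and M :: "'a set" and m :: nat
  assumes "m > 1"
    and "CHAR('a) > 0 \<Longrightarrow> coprime m CHAR('a)"
    and "mult_subgroup M"
    and "card M = m"
    and "M = s ` {..<m}"
    and "cyclo_field m dvd (\<Sum>i<m. monom (s i) (m - 1 - i))"
  shows "let f = (monom 1 m - 1) div gcd (monom 1 m - 1) (\<Sum>i<m. monom (s i) (m - 1 - i));
             t = (\<lambda>n::int. s (nat (n mod int m)))
         in f_sequence f t \<and> presents t M
            \<and> f dvd (monom 1 m - 1) div ([:-1, 1:] * cyclo_field m)"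
proof -
  define Q where "Q = (monom 1 m - 1 :: 'a poly)"
  define S where "S = (\<Sum>i<m. monom (s i) (m - 1 - i))"
  define f where "f = Q div gcd Q S"
  have m: "0 < m" using assms(1) by simp
  have inj: "inj_on s {..<m}" using assms(4,5) by (simp add: eq_card_imp_inj_on)
  have "poly S 1 = \<Sum>M"
    unfolding S_def assms(5) using inj by (simp add: poly_sum poly_monom sum.reindex)
  also have "\<dots> = 0" using assms(1,3,4) by (intro mult_subgroup_sum_eq_0) (simp_all add: assms(5))
  finally have "[:-1, 1:] * cyclo_field m dvd S"
    using assms(6)
      poly_cyclo_field_1_neq_0[OF assms(1) of_nat_neq_0_if_coprime_CHAR[OF m assms(2)]]
    unfolding S_def by (intro mult_linear_dvd_if_root) simp_all
  with x_minus_1_mult_cyclo_field_dvd[OF assms(1)]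
  have "[:-1, 1:] * cyclo_field m dvd gcd Q S" unfolding Q_def by simp
  then have "f dvd Q div ([:-1, 1:] * cyclo_field m)"
    unfolding f_def by (rule div_dvd_div_if_dvd) simp
  moreover have "Q dvd f * S" unfolding f_def
    by (metis dvd_div_mult_self gcd_dvd1 gcd_dvd2 mult_dvd_mono dvd_refl)
  then have "f_sequence f (\<lambda>n::int. s (nat (n mod int m)))"
    unfolding Q_def S_def by (rule f_sequence_periodic_extension[OF m])
  moreover have "presents (\<lambda>n::int. s (nat (n mod int m))) M"
    unfolding assms(5) using m inj by (rule presents_periodic_extension)
  ultimately show ?thesis unfolding Let_def f_def Q_def S_def by blast
qed

end
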